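(* Every strongly $n$-torsion clean ring is Dedekind finite (i.e. $ab=1$ implies $ba=1$).
   Context: All rings are associative with identity. A ring $R$ is strongly $n$-torsion clean if every $r\in R$ can be written $r=e+u$ with $e^2=e$, $u$ a unit, $u^n=1$ and $eu=ue$, and $n$ is the smallest natural number with this property. *)

theory Defs
  imports Main
begin

definition is_unit_r :: "'a::ring_1 \<Rightarrow> bool" where
  "is_unit_r u \<longleftrightarrow> (\<exists>v. u * v = 1 \<and> v * u = 1)"

definition torsion_clean_with :: "nat \<Rightarrow> 'a::ring_1 itself \<Rightarrow> bool" where
  "torsion_clean_with n _ \<longleftrightarrow>
     (\<forall>r::'a. \<exists>e u. e * e = e \<and> is_unit_r u \<and> u ^ n = 1 \<and> e * u = u * e \<and> r = e + u)"

definition strongly_torsion_clean :: "nat \<Rightarrow> 'a::ring_1 itself \<Rightarrow> bool" where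
  "strongly_torsion_clean n T \<longleftrightarrow>
     1 \<le> n \<and> torsion_clean_with n T \<and> (\<forall>m. 1 \<le> m \<and> m < n \<longrightarrow> \<not> torsion_clean_with m T)"

end

theory Submission
  imports Defs
begin

text \<open>
Write \<open>a = e + u\<close> with \<open>e\<close> idempotent, \<open>u\<^sup>n = 1\<close> and \<open>e u = u e\<close>.
On the corner cut out by \<open>1 - e\<close> the element \<open>a\<close> acts as \<open>u\<close>, on the corner cut out by \<open>e\<close>
the element \<open>a - 1\<close> acts as \<open>u\<close>; hence \<open>a\<close> is a root of the monic polynomial
\<open>((x - 1)\<^sup>n - 1)(x\<^sup>n - 1)\<close>. If \<open>a b = 1\<close>, multiplying this relation on the right by \<open>b\<^sup>n\<close> twice
reverses the polynomial and gives \<open>1 = b w\<close> for some \<open>w\<close>, so \<open>b\<close> is two-sided invertible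
and \<open>a\<close> is its inverse.
\<close>

lemma left_mult_power_eq:
  fixes c x y :: "'a::monoid_mult"
  assumes "c * x = c * y" and "c * y = y * c"
  shows "c * x ^ k = c * y ^ k"
proof (induction k)
  case (Suc k)
  have "c * x ^ Suc k = y * (c * x ^ k)"
    using assms by (simp add: mult.assoc[symmetric])
  also have "\<dots> = c * y ^ Suc k"
    using Suc assms by (simp add: mult.assoc[symmetric])
  finally show ?case .
qed simp

lemma torsion_clean_root:
  fixes e u :: "'a::ring_1"
  assumes idem: "e * e = e" and comm: "e * u = u * e" and torsion: "u ^ n = 1"
  shows "((e + u - 1) ^ n - 1) * ((e + u) ^ n - 1) = 0"
proof -
  let ?a = "e + u"
  have "(1 - e) * ?a ^ n = (1 - e) * u ^ n"
    by (rule left_mult_power_eq) (use idem comm in \<open>simp_all add: algebra_simps\<close>)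
  then have unit_corner: "(1 - e) * (?a ^ n - 1) = 0"
    using torsion by (simp add: right_diff_distrib)
  have "e * (?a - 1) ^ n = e * u ^ n"
    by (rule left_mult_power_eq) (use idem comm in \<open>simp_all add: algebra_simps\<close>)
  moreover have "(?a - 1) ^ n * e = e * (?a - 1) ^ n"
    by (rule power_commuting_commutes) (use idem comm in \<open>simp add: algebra_simps\<close>)
  ultimately have idem_corner: "((?a - 1) ^ n - 1) * e = 0"
    using torsion by (simp add: left_diff_distrib)
  have "((?a - 1) ^ n - 1) * (?a ^ n - 1)
      = ((?a - 1) ^ n - 1) * e * (?a ^ n - 1) + ((?a - 1) ^ n - 1) * ((1 - e) * (?a ^ n - 1))"
    by (simp add: algebra_simps)
  then show ?thesis
    using unit_corner idem_corner by simp
qed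

lemma power_mult_power_eq:
  fixes x y b :: "'a::monoid_mult"
  assumes "x * b = y" and "y * b = b * y"
  shows "x ^ k * b ^ k = y ^ k"
proof (induction k)
  case (Suc k)
  have "x ^ Suc k * b ^ Suc k = x ^ k * (x * b) * b ^ k"
    by (simp add: power_Suc2[symmetric] mult.assoc[symmetric])
  also have "\<dots> = x ^ k * b ^ k * y"
    using assms power_commuting_commutes[of b y k] by (simp add: mult.assoc)
  finally show ?case
    using Suc by (simp add: power_Suc2 del: power_Suc)
qed simp

lemma one_minus_power_eq:
  fixes b :: "'a::ring_1"
  shows "\<exists>w. (1 - b) ^ k = 1 - b * w"
proof (induction k)
  case 0
  show ?case by (intro exI[of _ 0]) simp
next
  case (Suc k)
  then obtain w where w: "(1 - b) ^ k = 1 - b * w" by blast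
  have "(1 - b) ^ Suc k = (1 - b * w) * (1 - b)"
    unfolding power_Suc2 w ..
  also have "\<dots> = 1 - b * (1 + w - w * b)"
    by (simp add: algebra_simps mult.assoc)
  finally show ?case by blast
qed

lemma left_inverse_eq_right_inverse:
  fixes a b w :: "'a::monoid_mult"
  assumes "a * b = 1" and "b * w = 1"
  shows "a = w"
  by (metis assms mult.assoc mult_1_left mult_1_right)

lemma inverse_commutes_if_torsion_clean_root:
  fixes a b :: "'a::ring_1"
  assumes ab: "a * b = 1" and "n \<ge> 1"
    and root: "((a - 1) ^ n - 1) * (a ^ n - 1) = 0"
  shows "b * a = 1"
proof -
  have reverse_pos: "(a ^ n - 1) * b ^ n = 1 - b ^ n"
    using left_right_inverse_power[OF ab] by (simp add: left_diff_distrib)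
  have reverse_neg: "((a - 1) ^ n - 1) * b ^ n = (1 - b) ^ n - b ^ n"
    using power_mult_power_eq[of "a - 1" b "1 - b" n] ab by (simp add: algebra_simps)
  have "0 = ((a - 1) ^ n - 1) * ((a ^ n - 1) * b ^ n) * b ^ n"
    using root by (simp add: mult.assoc[symmetric])
  also have "\<dots> = ((a - 1) ^ n - 1) * b ^ n * (1 - b ^ n)"
    unfolding reverse_pos by (simp add: algebra_simps mult.assoc)
  finally have reversed: "((1 - b) ^ n - b ^ n) * (1 - b ^ n) = 0"
    unfolding reverse_neg by simp
  obtain w where w: "(1 - b) ^ n = 1 - b * w"
    using one_minus_power_eq by blast
  obtain m where "n = Suc m"
    using \<open>n \<ge> 1\<close> by (cases n) auto
  then have "b ^ n = b * b ^ m" by simp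
  with w reversed have "(1 - b * w - b * b ^ m) * (1 - b * b ^ m) = 0"
    by simp
  then have right_inverse: "b * (w + b ^ m + b ^ m - (w + b ^ m) * (b * b ^ m)) = 1"
    by (simp add: algebra_simps mult.assoc)
  with ab have "a = w + b ^ m + b ^ m - (w + b ^ m) * (b * b ^ m)"
    by (rule left_inverse_eq_right_inverse)
  with right_inverse show ?thesis by simp
qed

theorem corollary2p5:
  fixes a b :: "'a::ring_1" and n :: nat
  assumes "strongly_torsion_clean n TYPE('a)"
    and "a * b = 1"
  shows "b * a = 1"
proof -
  have "n \<ge> 1" and "torsion_clean_with n TYPE('a)"
    using assms(1) unfolding strongly_torsion_clean_def by auto
  then obtain e u where "e * e = e" "u ^ n = 1" "e * u = u * e" "a = e + u"
    unfolding torsion_clean_with_def by blast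
  then have "((a - 1) ^ n - 1) * (a ^ n - 1) = 0"
    using torsion_clean_root by blast
  with assms(2) \<open>n \<ge> 1\<close> show ?thesis
    by (rule inverse_commutes_if_torsion_clean_root)
qed

end
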